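(* Let $H=([t],E)$ be a hypergraph on vertex set $[t]=\{1,\dots,t\}$ in which every edge $e\in E$ is a subset of $[t]$ with $2\le |e|$, and let $d$ be the maximal edge size. Let $f:\{0,1\}^n\to\{-1,1\}$. Consider the test: choose $x_1,\dots,x_t\in\{0,1\}^n$ independently and uniformly at random, and accept iff for every $e\in E$, $$\prod_{i\in e} f(x_i)\cdot f\Big(\sum_{i\in e}x_i\Big)=f(0)^{|e|+1}.$$ Then the probability that this test accepts $f$ is at most $\frac{1}{2^{|E|}}+\|f\|_{U_d}$.
   Context: $\{0,1\}^n$ is identified with $\mathbb F_2^n$ (addition coordinatewise mod 2). For $f:\{0,1\}^n\to\mathbb R$ and integer $d\ge1$, the $d$-th Gowers uniformity norm is $$\|f\|_{U_d}=\Big[\mathbb E_{x,y_1,\dots,y_d}\prod_{S\subseteq[d]} f\Big(x+\sum_{i\in S}y_i\Big)\Big]^{1/2^d},$$ with $x,y_1,\dots,y_d$ independent and uniform in $\{0,1\}^n$. *)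

theory Defs
  imports Complex_Main "HOL-Library.FuncSet"
begin

text \<open>Elements of {0,1}^n = F_2^n are represented as functions nat => bool
  vanishing (False) outside {0..<n}.\<close>

definition cube :: "nat \<Rightarrow> (nat \<Rightarrow> bool) set" where
  "cube n = {x. \<forall>i\<ge>n. x i = False}"

definition vzero :: "nat \<Rightarrow> bool" where
  "vzero = (\<lambda>_. False)"

definition vadd :: "(nat \<Rightarrow> bool) \<Rightarrow> (nat \<Rightarrow> bool) \<Rightarrow> (nat \<Rightarrow> bool)" where
  "vadd x y = (\<lambda>j. x j \<noteq> y j)"

definition vsum :: "'i set \<Rightarrow> ('i \<Rightarrow> nat \<Rightarrow> bool) \<Rightarrow> (nat \<Rightarrow> bool)" where
  "vsum S y = (\<lambda>j. odd (card {i\<in>S. y i j}))"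

definition gowers_norm :: "nat \<Rightarrow> nat \<Rightarrow> ((nat \<Rightarrow> bool) \<Rightarrow> real) \<Rightarrow> real" where
  "gowers_norm n d f =
     root (2 ^ d)
       ((\<Sum>x\<in>cube n. \<Sum>y\<in>PiE {1..d} (\<lambda>_. cube n).
            \<Prod>S\<in>Pow {1..d}. f (vadd x (vsum S y)))
        / real (card (cube n) * card (PiE {1..d} (\<lambda>_. cube n))))"

definition accept_prob :: "nat \<Rightarrow> nat \<Rightarrow> nat set set \<Rightarrow> ((nat \<Rightarrow> bool) \<Rightarrow> real) \<Rightarrow> real" where
  "accept_prob n t E f =
     real (card {x \<in> PiE {1..t} (\<lambda>_. cube n).
             \<forall>e\<in>E. (\<Prod>i\<in>e. f (x i)) * f (vsum e x) = f vzero ^ (card e + 1)})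
     / real (card (PiE {1..t} (\<lambda>_. cube n)))"

end

theory Submission
  imports Defs "HOL-Analysis.Convex"
begin

text \<open>
  For an edge e put s_e(x) = f(0)^(|e|+1) f(x_e) prod_{i in e} f(x_i), where x_e = sum_{i in e} x_i.
  For f with values in {-1, 1} this is a sign, and the test accepts iff s_e(x) = 1 for every edge.
  Hence the acceptance probability is the average of prod_{e in E} (1 + s_e(x))/2, that is
  2^(-|E|) sum_{F subset E} E_x prod_{e in F} s_e(x). The term F = {} is 1. For F nonempty choose
  e0 in F of maximal size k. Apart from f(x_e0), each factor of prod_{e in F} s_e is bounded by 1
  and does not depend on some x_j with j in e0: an edge e other than e0 cannot contain e0, and
  f(x_i) does not depend on x_j for j different from i. The Gowers--Cauchy--Schwarz inequality,
  one Cauchy--Schwarz step per vertex of e0, bounds such an average by ||f||_{U_k} <= ||f||_{U_d}.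
\<close>

lemma finite_cube [simp]: "finite (cube n)"
proof -
  have "cube n \<subseteq> (\<lambda>S i. i \<in> S) ` Pow {..<n}"
  proof
    fix x assume "x \<in> cube n"
    then have "{i. x i} \<in> Pow {..<n}"
      by (auto simp: cube_def) (meson not_le)
    then show "x \<in> (\<lambda>S i. i \<in> S) ` Pow {..<n}"
      by (intro image_eqI[of _ _ "{i. x i}"]) auto
  qed
  then show ?thesis
    by (rule finite_subset) simp
qed

lemma vzero_in_cube [simp]: "vzero \<in> cube n"
  by (simp add: cube_def vzero_def)

lemma cube_nonempty [simp]: "cube n \<noteq> {}"
  using vzero_in_cube by blast

lemma vadd_in_cube [simp]: "x \<in> cube n \<Longrightarrow> y \<in> cube n \<Longrightarrow> vadd x y \<in> cube n"
  by (simp add: cube_def vadd_def)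

lemma vadd_assoc: "vadd (vadd x y) z = vadd x (vadd y z)"
  by (auto simp: vadd_def)

lemma vadd_vzero [simp]: "vadd vzero x = x" "vadd x vzero = x"
  by (auto simp: vadd_def vzero_def)

lemma vadd_self [simp]: "vadd x x = vzero"
  by (simp add: vadd_def vzero_def)

lemma vsum_in_cube: "(\<And>i. i \<in> S \<Longrightarrow> y i \<in> cube n) \<Longrightarrow> vsum S y \<in> cube n"
proof -
  assume y: "\<And>i. i \<in> S \<Longrightarrow> y i \<in> cube n"
  have "vsum S y j = False" if "n \<le> j" for j
  proof -
    have none: "{i \<in> S. y i j} = {}"
      using y that by (auto simp: cube_def)
    show ?thesis
      unfolding vsum_def none by simp
  qed
  then show ?thesis
    by (simp add: cube_def)
qed

lemma vsum_empty [simp]: "vsum {} y = vzero"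
  by (simp add: vsum_def vzero_def)

lemma vsum_cong: "(\<And>i. i \<in> S \<Longrightarrow> y i = y' i) \<Longrightarrow> vsum S y = vsum S y'"
  unfolding vsum_def by (metis (mono_tags, lifting) Collect_cong)

lemma vsum_insert:
  assumes "finite S" "k \<notin> S"
  shows "vsum (insert k S) y = vadd (y k) (vsum S y)"
proof
  fix j
  have "{i \<in> insert k S. y i j} = (if y k j then insert k {i \<in> S. y i j} else {i \<in> S. y i j})"
    by auto
  then show "vsum (insert k S) y j = vadd (y k) (vsum S y) j"
    using assms by (simp add: vsum_def vadd_def)
qed

lemma vsum_singleton [simp]: "vsum {k} y = y k"
  using vsum_insert[of "{}" k y] by simp

lemma vsum_fun_upd_notin: "j \<notin> S \<Longrightarrow> vsum S (x(j := z)) = vsum S x"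
  by (rule vsum_cong) auto

lemma vsum_insert_fun_upd:
  "finite S \<Longrightarrow> k \<notin> S \<Longrightarrow> vsum (insert k S) (x(k := z)) = vadd z (vsum S x)"
  by (simp add: vsum_insert vsum_fun_upd_notin)

abbreviation tuples :: "'i set \<Rightarrow> nat \<Rightarrow> ('i \<Rightarrow> nat \<Rightarrow> bool) set" where
  "tuples J n \<equiv> PiE J (\<lambda>_. cube n)"

lemma finite_tuples [simp]: "finite J \<Longrightarrow> finite (tuples J n)"
  by (simp add: finite_PiE)

lemma tuples_nonempty [simp]: "tuples J n \<noteq> {}"
  by (simp add: PiE_eq_empty_iff)

definition avg :: "'a set \<Rightarrow> ('a \<Rightarrow> real) \<Rightarrow> real" where
  "avg A g = (\<Sum>a\<in>A. g a) / card A"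

lemma avg_cong: "(\<And>a. a \<in> A \<Longrightarrow> g a = g' a) \<Longrightarrow> avg A g = avg A g'"
  unfolding avg_def by (metis sum.cong)

lemma avg_mono: "(\<And>a. a \<in> A \<Longrightarrow> g a \<le> g' a) \<Longrightarrow> avg A g \<le> avg A g'"
  unfolding avg_def by (intro divide_right_mono sum_mono) auto

lemma avg_const: "finite A \<Longrightarrow> A \<noteq> {} \<Longrightarrow> avg A (\<lambda>_. c) = c"
  by (simp add: avg_def)

lemma avg_mult_left: "avg A (\<lambda>a. c * g a) = c * avg A g"
  by (simp add: avg_def sum_distrib_left)

lemma avg_mult_right: "avg A (\<lambda>a. g a * c) = avg A g * c"
  by (simp add: avg_def sum_distrib_right)

lemma avg_divide: "avg A (\<lambda>a. g a / c) = avg A g / c"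
  by (simp add: avg_def sum_divide_distrib mult.commute)

lemma avg_sum: "avg A (\<lambda>a. \<Sum>s\<in>S. g s a) = (\<Sum>s\<in>S. avg A (g s))"
  unfolding avg_def by (simp add: sum.swap[of _ A S] sum_divide_distrib)

lemma avg_swap: "avg A (\<lambda>a. avg B (\<lambda>b. g a b)) = avg B (\<lambda>b. avg A (\<lambda>a. g a b))"
  unfolding avg_def by (simp add: sum_divide_distrib[symmetric] sum.swap[of _ A B])

lemma avg_abs_le: "\<bar>avg A g\<bar> \<le> avg A (\<lambda>a. \<bar>g a\<bar>)"
  unfolding avg_def by (simp add: divide_right_mono sum_abs)

lemma avg_abs_le_one:
  assumes "finite A" "A \<noteq> {}" "\<And>a. a \<in> A \<Longrightarrow> \<bar>g a\<bar> \<le> 1"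
  shows "\<bar>avg A g\<bar> \<le> 1"
proof -
  have "\<bar>avg A g\<bar> \<le> avg A (\<lambda>a. \<bar>g a\<bar>)"
    by (rule avg_abs_le)
  also have "\<dots> \<le> avg A (\<lambda>_. 1)"
    using assms(3) by (rule avg_mono)
  also have "\<dots> = 1"
    using assms(1,2) by (rule avg_const)
  finally show ?thesis .
qed

lemma avg_square_le: "(avg A g)\<^sup>2 \<le> avg A (\<lambda>a. (g a)\<^sup>2)"
proof (cases "card A = 0")
  case False
  have "(avg A g)\<^sup>2 = (\<Sum>a\<in>A. g a)\<^sup>2 / (real (card A))\<^sup>2"
    by (simp add: avg_def power_divide)
  also have "\<dots> \<le> (\<Sum>a\<in>A. (g a)\<^sup>2) * card A / (real (card A))\<^sup>2"
    by (rule divide_right_mono[OF sum_squared_le_sum_of_squares]) simp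
  also have "\<dots> = avg A (\<lambda>a. (g a)\<^sup>2)"
    using False by (simp add: avg_def power2_eq_square)
  finally show ?thesis .
qed (simp add: avg_def)

lemma avg_power_le: "\<bar>avg A g\<bar> ^ 2 ^ m \<le> avg A (\<lambda>a. \<bar>g a\<bar> ^ 2 ^ m)"
proof (induction m)
  case 0
  then show ?case
    using avg_abs_le by simp
next
  case (Suc m)
  have "\<bar>avg A g\<bar> ^ 2 ^ Suc m = (\<bar>avg A g\<bar> ^ 2 ^ m)\<^sup>2"
    by (simp add: power_mult[symmetric] mult.commute)
  also have "\<dots> \<le> (avg A (\<lambda>a. \<bar>g a\<bar> ^ 2 ^ m))\<^sup>2"
    using Suc by (intro power_mono) auto
  also have "\<dots> \<le> avg A (\<lambda>a. (\<bar>g a\<bar> ^ 2 ^ m)\<^sup>2)"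
    by (rule avg_square_le)
  also have "\<dots> = avg A (\<lambda>a. \<bar>g a\<bar> ^ 2 ^ Suc m)"
    by (simp add: power_mult[symmetric] mult.commute)
  finally show ?case .
qed

lemma avg_translate:
  assumes "z \<in> cube n"
  shows "avg (cube n) (\<lambda>h. g (vadd z h)) = avg (cube n) g"
proof -
  have "(\<Sum>h\<in>cube n. g (vadd z h)) = (\<Sum>h\<in>cube n. g h)"
    by (rule sum.reindex_bij_witness[where i = "vadd z" and j = "vadd z"])
      (use assms in \<open>auto simp: vadd_assoc[symmetric]\<close>)
  then show ?thesis
    by (simp add: avg_def)
qed

lemma avg_tuples_insert:
  assumes "finite J" "k \<notin> J"
  shows "avg (tuples (insert k J) n) \<phi> = avg (tuples J n) (\<lambda>u. avg (cube n) (\<lambda>z. \<phi> (u(k := z))))"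
proof -
  let ?upd = "\<lambda>(z, u). u(k := z)"
  have inj: "inj_on ?upd (cube n \<times> tuples J n)"
    using inj_combinator[OF assms(2)] .
  have image: "tuples (insert k J) n = ?upd ` (cube n \<times> tuples J n)"
    by (rule PiE_insert_eq)
  have "(\<Sum>x\<in>tuples (insert k J) n. \<phi> x) = (\<Sum>p\<in>cube n \<times> tuples J n. \<phi> (?upd p))"
    unfolding image by (rule sum.reindex[OF inj, unfolded comp_def])
  also have "\<dots> = (\<Sum>z\<in>cube n. \<Sum>u\<in>tuples J n. \<phi> (u(k := z)))"
    by (simp add: sum.cartesian_product split_def)
  also have "\<dots> = (\<Sum>u\<in>tuples J n. \<Sum>z\<in>cube n. \<phi> (u(k := z)))"
    by (rule sum.swap)
  moreover have "card (tuples (insert k J) n) = card (cube n) * card (tuples J n)"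
    unfolding image card_image[OF inj] by (simp add: card_cartesian_product)
  ultimately show ?thesis
    by (simp add: avg_def sum_divide_distrib[symmetric] mult.commute)
qed

lemma avg_square_cube:
  "(avg (cube n) a)\<^sup>2 = avg (cube n) (\<lambda>h. avg (cube n) (\<lambda>z. a z * a (vadd z h)))"
proof -
  have "(avg (cube n) a)\<^sup>2 = avg (cube n) (\<lambda>z. a z * avg (cube n) (\<lambda>h. a (vadd z h)))"
    by (simp add: avg_mult_right avg_translate power2_eq_square cong: avg_cong)
  also have "\<dots> = avg (cube n) (\<lambda>z. avg (cube n) (\<lambda>h. a z * a (vadd z h)))"
    by (simp add: avg_mult_left)
  also have "\<dots> = avg (cube n) (\<lambda>h. avg (cube n) (\<lambda>z. a z * a (vadd z h)))"
    by (rule avg_swap)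
  finally show ?thesis .
qed

section \<open>Gowers norms\<close>

definition mderiv :: "(nat \<Rightarrow> bool) \<Rightarrow> ((nat \<Rightarrow> bool) \<Rightarrow> real) \<Rightarrow> (nat \<Rightarrow> bool) \<Rightarrow> real" where
  "mderiv h f = (\<lambda>y. f y * f (vadd y h))"

text \<open>gowers_power n m f is ||f||_{U_m}^(2^m), computed through the recursion
  ||f||_{U_(m+1)}^(2^(m+1)) = E_h ||mderiv h f||_{U_m}^(2^m).\<close>

fun gowers_power :: "nat \<Rightarrow> nat \<Rightarrow> ((nat \<Rightarrow> bool) \<Rightarrow> real) \<Rightarrow> real" where
  "gowers_power n 0 f = avg (cube n) f"
| "gowers_power n (Suc m) f = avg (cube n) (\<lambda>h. gowers_power n m (mderiv h f))"

lemma gowers_power_one: "gowers_power n 1 f = (avg (cube n) f)\<^sup>2"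
  by (simp add: avg_square_cube mderiv_def)

lemma gowers_power_square_le: "(gowers_power n m f)\<^sup>2 \<le> gowers_power n (Suc m) f"
proof (induction m arbitrary: f)
  case 0
  then show ?case
    using gowers_power_one[of n f] by simp
next
  case (Suc m)
  have "(gowers_power n (Suc m) f)\<^sup>2 \<le> avg (cube n) (\<lambda>h. (gowers_power n m (mderiv h f))\<^sup>2)"
    by (simp only: gowers_power.simps) (rule avg_square_le)
  also have "\<dots> \<le> avg (cube n) (\<lambda>h. gowers_power n (Suc m) (mderiv h f))"
    by (rule avg_mono) (rule Suc)
  also have "\<dots> = gowers_power n (Suc (Suc m)) f"
    by simp
  finally show ?case .
qed

lemma gowers_power_nonneg: "0 < m \<Longrightarrow> 0 \<le> gowers_power n m f"
  using gowers_power_square_le[of n "m - 1" f] by (simp add: order_trans[OF zero_le_power2])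

lemma root_gowers_power_mono:
  assumes "0 < k" "k \<le> d"
  shows "root (2 ^ k) (gowers_power n k f) \<le> root (2 ^ d) (gowers_power n d f)"
  using assms(2)
proof (induction d rule: dec_induct)
  case base
  then show ?case by simp
next
  case (step d)
  have "root (2 ^ d) (gowers_power n d f) = root (2 ^ d) (root 2 ((gowers_power n d f)\<^sup>2))"
    using gowers_power_nonneg[of d n f] assms(1) step.hyps by (simp add: real_root_power_cancel)
  also have "\<dots> = root (2 ^ Suc d) ((gowers_power n d f)\<^sup>2)"
    by (simp add: real_root_mult_exp[symmetric] mult.commute)
  also have "\<dots> \<le> root (2 ^ Suc d) (gowers_power n (Suc d) f)"
    by (intro real_root_le_mono gowers_power_square_le) simp
  finally show ?case
    using step.IH by simp
qed

definition gowers_avg :: "nat \<Rightarrow> 'i set \<Rightarrow> ((nat \<Rightarrow> bool) \<Rightarrow> real) \<Rightarrow> real" where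
  "gowers_avg n I f =
     avg (cube n) (\<lambda>x. avg (tuples I n) (\<lambda>y. \<Prod>S\<in>Pow I. f (vadd x (vsum S y))))"

lemma prod_Pow_insert:
  assumes "finite I" "k \<notin> I"
  shows "(\<Prod>S\<in>Pow (insert k I). g S) = (\<Prod>S\<in>Pow I. g S * g (insert k S))"
proof -
  have "inj_on (insert k) (Pow I)"
    using assms(2) by (intro inj_onI) (metis PowD insert_ident subset_eq)
  then have "(\<Prod>S\<in>insert k ` Pow I. g S) = (\<Prod>S\<in>Pow I. g (insert k S))"
    by (rule prod.reindex[unfolded comp_def])
  moreover have "(\<Prod>S\<in>Pow (insert k I). g S) = (\<Prod>S\<in>Pow I. g S) * (\<Prod>S\<in>insert k ` Pow I. g S)"
    unfolding Pow_insert using assms by (intro prod.union_disjoint) auto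
  ultimately show ?thesis
    by (simp add: prod.distrib)
qed

lemma prod_Pow_insert_mderiv:
  assumes "finite I" "k \<notin> I"
  shows "(\<Prod>S\<in>Pow (insert k I). f (vadd x (vsum S (u(k := h)))))
       = (\<Prod>S\<in>Pow I. mderiv h f (vadd x (vsum S u)))"
proof -
  have "finite S" "k \<notin> S" if "S \<subseteq> I" for S
    using that assms finite_subset by auto
  then have "vsum S (u(k := h)) = vsum S u" "vsum (insert k S) (u(k := h)) = vadd h (vsum S u)"
    if "S \<subseteq> I" for S
    using that by (simp_all add: vsum_fun_upd_notin vsum_insert_fun_upd)
  moreover have "vadd x (vadd h y) = vadd (vadd x y) h" for y
    by (auto simp: vadd_def)
  ultimately show ?thesis
    unfolding prod_Pow_insert[OF assms] mderiv_def by (intro prod.cong) auto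
qed

lemma gowers_avg_eq_power: "finite I \<Longrightarrow> gowers_avg n I f = gowers_power n (card I) f"
proof (induction I arbitrary: f rule: finite_induct)
  case empty
  show ?case
    by (simp add: gowers_avg_def avg_def)
next
  case (insert k I)
  have "gowers_avg n (insert k I) f = avg (cube n) (\<lambda>x. avg (tuples I n) (\<lambda>u. avg (cube n) (\<lambda>h.
          \<Prod>S\<in>Pow I. mderiv h f (vadd x (vsum S u)))))"
    unfolding gowers_avg_def using insert.hyps
    by (simp add: avg_tuples_insert prod_Pow_insert_mderiv)
  also have "\<dots> = avg (cube n) (\<lambda>x. avg (cube n) (\<lambda>h. avg (tuples I n) (\<lambda>u.
          \<Prod>S\<in>Pow I. mderiv h f (vadd x (vsum S u)))))"
    by (intro avg_cong avg_swap)
  also have "\<dots> = avg (cube n) (\<lambda>h. gowers_avg n I (mderiv h f))"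
    unfolding gowers_avg_def by (rule avg_swap)
  also have "\<dots> = gowers_power n (card (insert k I)) f"
    using insert by simp
  finally show ?case .
qed

lemma gowers_norm_eq_root_power: "gowers_norm n d f = root (2 ^ d) (gowers_power n d f)"
proof -
  have "gowers_norm n d f = root (2 ^ d) (gowers_avg n {1..d} f)"
    unfolding gowers_norm_def gowers_avg_def avg_def
    by (simp add: sum_divide_distrib[symmetric] mult.commute)
  then show ?thesis
    by (simp add: gowers_avg_eq_power)
qed

lemma gowers_norm_nonneg: "0 < d \<Longrightarrow> 0 \<le> gowers_norm n d f"
  by (simp add: gowers_norm_eq_root_power gowers_power_nonneg)

section \<open>The Gowers--Cauchy--Schwarz inequality\<close>

definition ignores_coord :: "'i \<Rightarrow> (('i \<Rightarrow> 'a) \<Rightarrow> 'b) \<Rightarrow> bool" where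
  "ignores_coord j g \<longleftrightarrow> (\<forall>x z. g (x(j := z)) = g x)"

lemma ignores_coordD: "ignores_coord j g \<Longrightarrow> g (x(j := z)) = g x"
  by (simp add: ignores_coord_def)

lemma ignores_coord_mult:
  "ignores_coord j g \<Longrightarrow> ignores_coord j g' \<Longrightarrow> ignores_coord j (\<lambda>x. g x * g' x)"
  by (simp add: ignores_coord_def)

lemma ignores_coord_prod:
  "(\<And>q. q \<in> Q \<Longrightarrow> ignores_coord j (h q)) \<Longrightarrow> ignores_coord j (\<lambda>x. \<Prod>q\<in>Q. h q x)"
  by (simp add: ignores_coord_def)

lemma ignores_coord_fun_upd:
  assumes "j \<noteq> k" "ignores_coord j g"
  shows "ignores_coord j (\<lambda>x. g (x(k := z)))"
  using assms unfolding ignores_coord_def by (metis fun_upd_twist)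

lemma avg_tuples_factor_coord:
  assumes "finite J" "k \<notin> J" "finite I" "k \<notin> I" "ignores_coord k (w k)"
  shows "avg (tuples (insert k J) n) (\<lambda>x. f (vadd c (vsum (insert k I) x)) * (\<Prod>i\<in>insert k I. w i x))
       = avg (tuples J n) (\<lambda>u. w k (u(k := vzero)) *
           avg (cube n) (\<lambda>z. f (vadd (vadd c z) (vsum I u)) * (\<Prod>i\<in>I. w i (u(k := z)))))"
proof -
  have "f (vadd c (vsum (insert k I) (u(k := z)))) * (\<Prod>i\<in>insert k I. w i (u(k := z)))
      = w k (u(k := vzero)) * (f (vadd (vadd c z) (vsum I u)) * (\<Prod>i\<in>I. w i (u(k := z))))" for u z
  proof -
    have "w k (u(k := z)) = w k (u(k := vzero))"
      using ignores_coordD[OF assms(5), of "u(k := vzero)" z] by simp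
    moreover have "vadd c (vsum (insert k I) (u(k := z))) = vadd (vadd c z) (vsum I u)"
      using assms(3,4) by (simp add: vsum_insert_fun_upd vadd_assoc)
    ultimately show ?thesis
      using assms(3,4) by simp
  qed
  then show ?thesis
    using assms(1,2) by (simp add: avg_tuples_insert avg_mult_left)
qed

lemma avg_weighted_square_le:
  assumes "\<And>u. u \<in> P \<Longrightarrow> \<bar>W u\<bar> \<le> 1"
  shows "(avg P (\<lambda>u. W u * avg (cube n) (a u)))\<^sup>2
       \<le> avg (cube n) (\<lambda>h. avg (cube n) (\<lambda>z. avg P (\<lambda>u. a u z * a u (vadd z h))))"
proof -
  have "(avg P (\<lambda>u. W u * avg (cube n) (a u)))\<^sup>2 \<le> avg P (\<lambda>u. (W u * avg (cube n) (a u))\<^sup>2)"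
    by (rule avg_square_le)
  also have "\<dots> \<le> avg P (\<lambda>u. (avg (cube n) (a u))\<^sup>2)"
  proof (rule avg_mono)
    fix u assume "u \<in> P"
    then have "(W u)\<^sup>2 \<le> 1"
      using assms abs_square_le_1 by blast
    then show "(W u * avg (cube n) (a u))\<^sup>2 \<le> (avg (cube n) (a u))\<^sup>2"
      by (simp add: power_mult_distrib mult_left_le_one_le)
  qed
  also have "\<dots> = avg P (\<lambda>u. avg (cube n) (\<lambda>h. avg (cube n) (\<lambda>z. a u z * a u (vadd z h))))"
    by (simp add: avg_square_cube)
  also have "\<dots> = avg (cube n) (\<lambda>h. avg P (\<lambda>u. avg (cube n) (\<lambda>z. a u z * a u (vadd z h))))"
    by (rule avg_swap)
  also have "\<dots> = avg (cube n) (\<lambda>h. avg (cube n) (\<lambda>z. avg P (\<lambda>u. a u z * a u (vadd z h))))"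
    by (intro avg_cong avg_swap)
  finally show ?thesis .
qed

lemma power_le_avg_avg:
  assumes "finite C" "C \<noteq> {}" "0 \<le> s" "s \<le> avg A (\<lambda>h. avg C (B h))"
    and "\<And>h z. h \<in> A \<Longrightarrow> z \<in> C \<Longrightarrow> \<bar>B h z\<bar> ^ 2 ^ m \<le> G h"
  shows "s ^ 2 ^ m \<le> avg A G"
proof -
  have "s ^ 2 ^ m \<le> \<bar>avg A (\<lambda>h. avg C (B h))\<bar> ^ 2 ^ m"
    using assms(3,4) by (intro power_mono) auto
  also have "\<dots> \<le> avg A (\<lambda>h. \<bar>avg C (B h)\<bar> ^ 2 ^ m)"
    by (rule avg_power_le)
  also have "\<dots> \<le> avg A (\<lambda>h. avg C (\<lambda>z. \<bar>B h z\<bar> ^ 2 ^ m))"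
    by (intro avg_mono avg_power_le)
  also have "\<dots> \<le> avg A (\<lambda>h. avg C (\<lambda>_. G h))"
    using assms(5) by (intro avg_mono)
  also have "\<dots> = avg A G"
    using assms(1,2) by (simp add: avg_const)
  finally show ?thesis .
qed

lemma abs_avg_single_coord_le:
  assumes "finite J" "k \<notin> J" "c \<in> cube n"
    and "\<And>x. x \<in> tuples (insert k J) n \<Longrightarrow> \<bar>w x\<bar> \<le> 1" "ignores_coord k w"
  shows "\<bar>avg (tuples (insert k J) n) (\<lambda>x. f (vadd c (x k)) * w x)\<bar>\<^sup>2 \<le> gowers_power n 1 f"
proof -
  have "avg (tuples (insert k J) n) (\<lambda>x. f (vadd c (x k)) * w x)
      = avg (tuples J n) (\<lambda>u. avg (cube n) (\<lambda>z. f (vadd c z) * w (u(k := vzero))))"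
    using assms(1,2) ignores_coordD[OF assms(5)] by (simp add: avg_tuples_insert)
  also have "\<dots> = avg (cube n) f * avg (tuples J n) (\<lambda>u. w (u(k := vzero)))"
    using assms(3) by (simp add: avg_mult_right avg_mult_left avg_translate)
  finally have factored: "avg (tuples (insert k J) n) (\<lambda>x. f (vadd c (x k)) * w x)
      = avg (cube n) f * avg (tuples J n) (\<lambda>u. w (u(k := vzero)))" .
  have "\<bar>w (u(k := vzero))\<bar> \<le> 1" if "u \<in> tuples J n" for u
    using assms(4) PiE_fun_upd[OF vzero_in_cube that] by blast
  then have "\<bar>avg (tuples J n) (\<lambda>u. w (u(k := vzero)))\<bar> \<le> 1"
    using assms(1) by (intro avg_abs_le_one) auto
  then have "\<bar>avg (tuples J n) (\<lambda>u. w (u(k := vzero)))\<bar>\<^sup>2 \<le> 1"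
    by (simp add: abs_square_le_1)
  then show ?thesis
    unfolding factored gowers_power_one
    by (simp add: power_mult_distrib mult_right_le_one_le)
qed

lemma square_avg_tuples_insert_le:
  assumes "finite J" "k \<notin> J" "finite I" "k \<notin> I"
    and "\<And>x. x \<in> tuples (insert k J) n \<Longrightarrow> \<bar>w k x\<bar> \<le> 1" "ignores_coord k (w k)"
  shows "(avg (tuples (insert k J) n)
            (\<lambda>x. f (vadd c (vsum (insert k I) x)) * (\<Prod>i\<in>insert k I. w i x)))\<^sup>2
       \<le> avg (cube n) (\<lambda>h. avg (cube n) (\<lambda>z. avg (tuples J n) (\<lambda>u.
            mderiv h f (vadd (vadd c z) (vsum I u)) *
            (\<Prod>i\<in>I. w i (u(k := z)) * w i (u(k := vadd z h))))))"
proof -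
  define a where "a u z = f (vadd (vadd c z) (vsum I u)) * (\<Prod>i\<in>I. w i (u(k := z)))" for u z
  have "\<bar>w k (u(k := vzero))\<bar> \<le> 1" if "u \<in> tuples J n" for u
    using assms(5) PiE_fun_upd[OF vzero_in_cube that] by blast
  have "a u z * a u (vadd z h)
      = mderiv h f (vadd (vadd c z) (vsum I u)) * (\<Prod>i\<in>I. w i (u(k := z)) * w i (u(k := vadd z h)))"
    for u z h
  proof -
    have "vadd (vadd c (vadd z h)) y = vadd (vadd (vadd c z) y) h" for y
      by (auto simp: vadd_def)
    then show ?thesis
      unfolding a_def mderiv_def by (simp add: prod.distrib ac_simps)
  qed
  moreover have "(avg (tuples (insert k J) n)
        (\<lambda>x. f (vadd c (vsum (insert k I) x)) * (\<Prod>i\<in>insert k I. w i x)))\<^sup>2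
      = (avg (tuples J n) (\<lambda>u. w k (u(k := vzero)) * avg (cube n) (a u)))\<^sup>2"
    unfolding a_def avg_tuples_factor_coord[where w = w, OF assms(1-4,6)] by (rule refl)
  moreover have "\<dots> \<le> avg (cube n) (\<lambda>h. avg (cube n) (\<lambda>z.
      avg (tuples J n) (\<lambda>u. a u z * a u (vadd z h))))"
    by (rule avg_weighted_square_le) fact
  ultimately show ?thesis
    by simp
qed

theorem gowers_cauchy_schwarz:
  fixes f :: "(nat \<Rightarrow> bool) \<Rightarrow> real" and w :: "'i \<Rightarrow> ('i \<Rightarrow> nat \<Rightarrow> bool) \<Rightarrow> real"
  assumes "finite I" "I \<noteq> {}" "finite J" "I \<subseteq> J" "c \<in> cube n"
    and "\<And>i x. i \<in> I \<Longrightarrow> x \<in> tuples J n \<Longrightarrow> \<bar>w i x\<bar> \<le> 1"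
    and "\<And>i. i \<in> I \<Longrightarrow> ignores_coord i (w i)"
  shows "\<bar>avg (tuples J n) (\<lambda>x. f (vadd c (vsum I x)) * (\<Prod>i\<in>I. w i x))\<bar> ^ 2 ^ card I
           \<le> gowers_power n (card I) f"
  using assms
proof (induction I arbitrary: J c f w rule: finite_ne_induct)
  case (singleton k)
  define J' where "J' = J - {k}"
  have "J = insert k J'" "k \<notin> J'" "finite J'"
    using singleton.prems by (auto simp: J'_def)
  then show ?case
    using abs_avg_single_coord_le[of J' k c n "w k" f] singleton.prems by simp
next
  case (insert k I)
  define J' where "J' = J - {k}"
  have J: "J = insert k J'" "k \<notin> J'" "finite J'" "I \<subseteq> J'"
    using insert.prems insert.hyps by (auto simp: J'_def)
  have w_upd: "\<bar>w i (u(k := y))\<bar> \<le> 1" if "i \<in> I" "u \<in> tuples J' n" "y \<in> cube n" for i u y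
    using insert.prems(4)[of i "u(k := y)"] PiE_fun_upd[OF that(3,2)] J(1) that(1) by blast
  define B where "B h z = avg (tuples J' n) (\<lambda>u. mderiv h f (vadd (vadd c z) (vsum I u)) *
                     (\<Prod>i\<in>I. w i (u(k := z)) * w i (u(k := vadd z h))))" for h z
  let ?S = "avg (tuples J n) (\<lambda>x. f (vadd c (vsum (insert k I) x)) * (\<Prod>i\<in>insert k I. w i x))"
  have S_square: "?S\<^sup>2 \<le> avg (cube n) (\<lambda>h. avg (cube n) (B h))"
    unfolding B_def J(1) using J insert by (intro square_avg_tuples_insert_le) auto
  have B_bound: "\<bar>B h z\<bar> ^ 2 ^ card I \<le> gowers_power n (card I) (mderiv h f)"
    if "h \<in> cube n" "z \<in> cube n" for h z
    unfolding B_def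
  proof (rule insert.IH)
    show "\<bar>w i (u(k := z)) * w i (u(k := vadd z h))\<bar> \<le> 1" if "i \<in> I" "u \<in> tuples J' n" for i u
      using w_upd that \<open>h \<in> cube n\<close> \<open>z \<in> cube n\<close> by (simp add: abs_mult mult_le_one)
    show "ignores_coord i (\<lambda>u. w i (u(k := z)) * w i (u(k := vadd z h)))" if "i \<in> I" for i
      using insert.prems(5) insert.hyps that
      by (auto intro!: ignores_coord_mult ignores_coord_fun_upd)
  qed (use J that insert.prems in auto)
  have "\<bar>?S\<bar> ^ 2 ^ card (insert k I) = (?S\<^sup>2) ^ 2 ^ card I"
    using insert.hyps by (simp add: power_mult[symmetric] mult.commute power_even_abs)
  also have "\<dots> \<le> avg (cube n) (\<lambda>h. gowers_power n (card I) (mderiv h f))"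
    using S_square B_bound by (intro power_le_avg_avg) auto
  also have "\<dots> = gowers_power n (card (insert k I)) f"
    using insert.hyps by simp
  finally show ?case .
qed

corollary gowers_cauchy_schwarz_family:
  fixes f :: "(nat \<Rightarrow> bool) \<Rightarrow> real" and h :: "'q \<Rightarrow> ('i \<Rightarrow> nat \<Rightarrow> bool) \<Rightarrow> real"
  assumes "finite I" "I \<noteq> {}" "finite J" "I \<subseteq> J" "c \<in> cube n" "finite Q"
    and bounded: "\<And>q x. q \<in> Q \<Longrightarrow> x \<in> tuples J n \<Longrightarrow> \<bar>h q x\<bar> \<le> 1"
    and ignores: "\<And>q. q \<in> Q \<Longrightarrow> \<exists>j\<in>I. ignores_coord j (h q)"
  shows "\<bar>avg (tuples J n) (\<lambda>x. f (vadd c (vsum I x)) * (\<Prod>q\<in>Q. h q x))\<bar> ^ 2 ^ card I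
           \<le> gowers_power n (card I) f"
proof -
  obtain \<sigma> where \<sigma>: "\<And>q. q \<in> Q \<Longrightarrow> \<sigma> q \<in> I \<and> ignores_coord (\<sigma> q) (h q)"
    using ignores by metis
  define w where "w j x = (\<Prod>q\<in>{q \<in> Q. \<sigma> q = j}. h q x)" for j x
  have "(\<Prod>j\<in>I. w j x) = (\<Prod>q\<in>Q. h q x)" for x
    unfolding w_def using \<sigma> assms(1,6) by (intro prod.group) auto
  moreover have "\<bar>avg (tuples J n) (\<lambda>x. f (vadd c (vsum I x)) * (\<Prod>j\<in>I. w j x))\<bar> ^ 2 ^ card I
      \<le> gowers_power n (card I) f"
  proof (rule gowers_cauchy_schwarz[OF assms(1-5)])
    show "\<bar>w j x\<bar> \<le> 1" if "x \<in> tuples J n" for j x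
      unfolding w_def abs_prod using bounded that by (intro prod_le_1) auto
    show "ignores_coord j (w j)" for j
      unfolding w_def using \<sigma> by (auto intro: ignores_coord_prod)
  qed
  ultimately show ?thesis
    by simp
qed

section \<open>The hypergraph test\<close>

definition edge_sign :: "((nat \<Rightarrow> bool) \<Rightarrow> real) \<Rightarrow> 'i set \<Rightarrow> ('i \<Rightarrow> nat \<Rightarrow> bool) \<Rightarrow> real" where
  "edge_sign f e x = f vzero ^ (card e + 1) * ((\<Prod>i\<in>e. f (x i)) * f (vsum e x))"

lemma abs_edge_sign:
  assumes f_pm: "\<forall>x\<in>cube n. f x \<in> {-1, 1}" and "e \<subseteq> J" "x \<in> tuples J n"
  shows "\<bar>edge_sign f e x\<bar> = 1"
proof -
  have abs_f: "\<bar>f y\<bar> = 1" if "y \<in> cube n" for y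
    using f_pm that by auto
  have "x i \<in> cube n" if "i \<in> e" for i
    using assms(2,3) that by (auto simp: PiE_mem)
  then show ?thesis
    by (simp add: edge_sign_def abs_mult power_abs abs_prod abs_f vsum_in_cube)
qed

lemma edge_sign_ignores_coord:
  assumes "j \<notin> e"
  shows "ignores_coord j (edge_sign f e)"
proof -
  have "(\<Prod>i\<in>e. f ((x(j := z)) i)) = (\<Prod>i\<in>e. f (x i))" for x z
    using assms by (intro prod.cong) auto
  then show ?thesis
    using assms by (simp add: ignores_coord_def edge_sign_def vsum_fun_upd_notin del: fun_upd_apply)
qed

lemma edge_sign_ignores_coord_of_larger_edge:
  assumes "finite e" "e \<noteq> e\<^sub>0" "card e \<le> card e\<^sub>0"
  shows "\<exists>j\<in>e\<^sub>0. ignores_coord j (edge_sign f e)"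
proof -
  have "\<not> e\<^sub>0 \<subseteq> e"
  proof
    assume "e\<^sub>0 \<subseteq> e"
    then show False
      using card_seteq[OF assms(1) _ assms(3)] assms(2) by simp
  qed
  then obtain j where "j \<in> e\<^sub>0" "j \<notin> e"
    by blast
  then show ?thesis
    using edge_sign_ignores_coord[of j e f] by blast
qed

lemma vertex_ignores_other_coord:
  assumes "i \<in> e\<^sub>0" "2 \<le> card e\<^sub>0"
  shows "\<exists>j\<in>e\<^sub>0. ignores_coord j (\<lambda>x. g (x i))"
proof -
  have "\<not> e\<^sub>0 \<subseteq> {i}"
    using assms(2) card_mono[of "{i}" e\<^sub>0] by auto
  then obtain j where "j \<in> e\<^sub>0" "j \<noteq> i"
    by blast
  then have "ignores_coord j (\<lambda>x. g (x i))"
    by (simp add: ignores_coord_def)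
  then show ?thesis
    using \<open>j \<in> e\<^sub>0\<close> by blast
qed

text \<open>Besides f(x_e0), the factors of prod_{e in F} edge_sign f e are indexed by
  (F - {e0}) <+> e0: the edges other than e0, and the vertices of e0.\<close>

definition test_factor :: "((nat \<Rightarrow> bool) \<Rightarrow> real) \<Rightarrow> 'i set + 'i \<Rightarrow> ('i \<Rightarrow> nat \<Rightarrow> bool) \<Rightarrow> real" where
  "test_factor f = case_sum (edge_sign f) (\<lambda>i x. f (x i))"

lemma prod_edge_sign_eq_test_factors:
  assumes "finite F" "e\<^sub>0 \<in> F" "finite e\<^sub>0"
  shows "(\<Prod>e\<in>F. edge_sign f e x)
       = f vzero ^ (card e\<^sub>0 + 1) * (f (vsum e\<^sub>0 x) * (\<Prod>q\<in>(F - {e\<^sub>0}) <+> e\<^sub>0. test_factor f q x))"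
proof -
  have "(\<Prod>e\<in>F. edge_sign f e x) = edge_sign f e\<^sub>0 x * (\<Prod>e\<in>F - {e\<^sub>0}. edge_sign f e x)"
    by (rule prod.remove[OF assms(1,2)])
  then show ?thesis
    using assms by (simp add: prod.Plus comp_def test_factor_def edge_sign_def ac_simps)
qed

lemma abs_test_factor_le_one:
  assumes f_pm: "\<forall>x\<in>cube n. f x \<in> {-1, 1}" and "q \<in> Pow J <+> J" "x \<in> tuples J n"
  shows "\<bar>test_factor f q x\<bar> \<le> 1"
proof -
  have "\<bar>edge_sign f e x\<bar> = 1" if "e \<subseteq> J" for e
    using abs_edge_sign[OF f_pm that assms(3)] .
  moreover have "\<bar>f (x i)\<bar> = 1" if "i \<in> J" for i
    using f_pm PiE_mem[OF assms(3) that] by fastforce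
  ultimately show ?thesis
    using assms(2) by (auto simp: test_factor_def)
qed

lemma test_factor_ignores_coord:
  assumes "q \<in> (F - {e\<^sub>0}) <+> e\<^sub>0" "\<And>e. e \<in> F \<Longrightarrow> finite e \<and> card e \<le> card e\<^sub>0" "2 \<le> card e\<^sub>0"
  shows "\<exists>j\<in>e\<^sub>0. ignores_coord j (test_factor f q)"
proof -
  consider (edge) e where "e \<in> F" "e \<noteq> e\<^sub>0" "q = Inl e" | (vertex) i where "i \<in> e\<^sub>0" "q = Inr i"
    using assms(1) by auto
  then show ?thesis
  proof cases
    case edge
    then show ?thesis
      using assms(2)[of e] edge_sign_ignores_coord_of_larger_edge[of e e\<^sub>0 f]
      by (simp add: test_factor_def)
  next
    case vertex
    then show ?thesis
      using assms(3) vertex_ignores_other_coord by (simp add: test_factor_def)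
  qed
qed

lemma abs_avg_prod_edge_sign_power_le:
  fixes f :: "(nat \<Rightarrow> bool) \<Rightarrow> real" and F :: "'i set set"
  assumes f_pm: "\<forall>x\<in>cube n. f x \<in> {-1, 1}" and "finite J" "finite F" "e\<^sub>0 \<in> F"
    and edges: "\<And>e. e \<in> F \<Longrightarrow> e \<subseteq> J \<and> card e \<le> card e\<^sub>0" and "2 \<le> card e\<^sub>0"
  shows "\<bar>avg (tuples J n) (\<lambda>x. \<Prod>e\<in>F. edge_sign f e x)\<bar> ^ 2 ^ card e\<^sub>0
           \<le> gowers_power n (card e\<^sub>0) f"
proof -
  let ?Q = "(F - {e\<^sub>0}) <+> e\<^sub>0"
  have finite_edges: "finite e" if "e \<in> F" for e
    using edges[OF that] assms(2) finite_subset by blast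
  have "\<bar>f vzero\<bar> = 1"
    using f_pm vzero_in_cube by fastforce
  then have "\<bar>f vzero ^ (card e\<^sub>0 + 1)\<bar> = 1"
    by (metis power_abs power_one)
  then have "\<bar>avg (tuples J n) (\<lambda>x. \<Prod>e\<in>F. edge_sign f e x)\<bar>
      = \<bar>avg (tuples J n) (\<lambda>x. f (vadd vzero (vsum e\<^sub>0 x)) * (\<Prod>q\<in>?Q. test_factor f q x))\<bar>"
    using prod_edge_sign_eq_test_factors[OF assms(3,4) finite_edges[OF assms(4)]]
    by (simp add: avg_mult_left abs_mult)
  also have "\<dots> ^ 2 ^ card e\<^sub>0 \<le> gowers_power n (card e\<^sub>0) f"
  proof (rule gowers_cauchy_schwarz_family)
    show "\<bar>test_factor f q x\<bar> \<le> 1" if "q \<in> ?Q" "x \<in> tuples J n" for q x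
      using that edges assms(4) by (intro abs_test_factor_le_one[OF f_pm]) auto
    show "\<exists>j\<in>e\<^sub>0. ignores_coord j (test_factor f q)" if "q \<in> ?Q" for q
      using that edges finite_edges assms(6) by (intro test_factor_ignores_coord) auto
  qed (use assms finite_edges edges in auto)
  finally show ?thesis .
qed

lemma abs_avg_prod_edge_sign_le_gowers_norm:
  fixes f :: "(nat \<Rightarrow> bool) \<Rightarrow> real" and F :: "'i set set"
  assumes f_pm: "\<forall>x\<in>cube n. f x \<in> {-1, 1}" and "finite J" "finite F" "F \<noteq> {}"
    and edges: "\<And>e. e \<in> F \<Longrightarrow> e \<subseteq> J \<and> 2 \<le> card e \<and> card e \<le> d"
  shows "\<bar>avg (tuples J n) (\<lambda>x. \<Prod>e\<in>F. edge_sign f e x)\<bar> \<le> gowers_norm n d f"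
proof -
  obtain e\<^sub>0 where e\<^sub>0: "e\<^sub>0 \<in> F" "\<And>e. e \<in> F \<Longrightarrow> card e \<le> card e\<^sub>0"
    using Max_in[of "card ` F"] Max_ge[of "card ` F"] assms(3,4) by fastforce
  let ?k = "card e\<^sub>0"
  have k: "2 \<le> ?k" "?k \<le> d"
    using edges e\<^sub>0(1) by auto
  have "\<bar>avg (tuples J n) (\<lambda>x. \<Prod>e\<in>F. edge_sign f e x)\<bar>
      = root (2 ^ ?k) (\<bar>avg (tuples J n) (\<lambda>x. \<Prod>e\<in>F. edge_sign f e x)\<bar> ^ 2 ^ ?k)"
    by (simp add: real_root_power_cancel)
  also have "\<dots> \<le> root (2 ^ ?k) (gowers_power n ?k f)"
    using edges e\<^sub>0 k assms(2,3)
    by (intro real_root_le_mono abs_avg_prod_edge_sign_power_le[OF f_pm]) auto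
  also have "\<dots> \<le> root (2 ^ d) (gowers_power n d f)"
    using k by (intro root_gowers_power_mono) auto
  finally show ?thesis
    by (simp add: gowers_norm_eq_root_power)
qed

lemma of_bool_Ball_eq_prod: "finite A \<Longrightarrow> of_bool (\<forall>a\<in>A. P a) = (\<Prod>a\<in>A. of_bool (P a) :: real)"
  by (induction A rule: finite_induct) auto

lemma of_bool_edge_test:
  assumes f_pm: "\<forall>x\<in>cube n. f x \<in> {-1, 1}" and "e \<subseteq> J" "x \<in> tuples J n"
  shows "of_bool ((\<Prod>i\<in>e. f (x i)) * f (vsum e x) = f vzero ^ (card e + 1))
       = (1 + edge_sign f e x) / 2"
proof -
  define s where "s = f vzero ^ (card e + 1)"
  define p where "p = (\<Prod>i\<in>e. f (x i)) * f (vsum e x)"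
  have "\<bar>f vzero\<bar> = 1"
    using f_pm vzero_in_cube by fastforce
  then have s: "s = 1 \<or> s = -1"
    unfolding s_def by (metis abs_power_minus power_abs power_one abs_eq_iff abs_1)
  moreover have "\<bar>s * p\<bar> = 1"
    using abs_edge_sign[OF assms] by (simp add: edge_sign_def s_def p_def)
  ultimately have p: "p = 1 \<or> p = -1"
    by (auto simp: abs_mult abs_eq_iff)
  show ?thesis
    unfolding edge_sign_def s_def[symmetric] p_def[symmetric] using s p by auto
qed

lemma of_bool_all_edge_tests:
  assumes f_pm: "\<forall>x\<in>cube n. f x \<in> {-1, 1}" and "finite E" "\<And>e. e \<in> E \<Longrightarrow> e \<subseteq> J"
    and "x \<in> tuples J n"
  shows "of_bool (\<forall>e\<in>E. (\<Prod>i\<in>e. f (x i)) * f (vsum e x) = f vzero ^ (card e + 1))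
       = (\<Sum>F\<in>Pow E. \<Prod>e\<in>F. edge_sign f e x) / 2 ^ card E"
proof -
  have "of_bool (\<forall>e\<in>E. (\<Prod>i\<in>e. f (x i)) * f (vsum e x) = f vzero ^ (card e + 1))
      = (\<Prod>e\<in>E. (1 + edge_sign f e x) / 2)"
    unfolding of_bool_Ball_eq_prod[OF assms(2)]
  proof (rule prod.cong[OF refl])
    show "of_bool ((\<Prod>i\<in>e. f (x i)) * f (vsum e x) = f vzero ^ (card e + 1))
        = (1 + edge_sign f e x) / 2" if "e \<in> E" for e
      using of_bool_edge_test[OF f_pm assms(3)[OF that] assms(4)] .
  qed
  also have "\<dots> = (\<Prod>e\<in>E. edge_sign f e x + 1) / 2 ^ card E"
    by (simp add: prod_dividef add.commute)
  also have "(\<Prod>e\<in>E. edge_sign f e x + 1) = (\<Sum>F\<in>Pow E. \<Prod>e\<in>F. edge_sign f e x)"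
    using prod_add[OF assms(2), of "\<lambda>e. edge_sign f e x" "\<lambda>_. 1"] by simp
  finally show ?thesis .
qed

lemma accept_prob_eq_sum_Pow:
  assumes f_pm: "\<forall>x\<in>cube n. f x \<in> {-1, 1}" and "finite E" "\<And>e. e \<in> E \<Longrightarrow> e \<subseteq> {1..t}"
  shows "accept_prob n t E f
       = (\<Sum>F\<in>Pow E. avg (tuples {1..t} n) (\<lambda>x. \<Prod>e\<in>F. edge_sign f e x)) / 2 ^ card E"
proof -
  have "accept_prob n t E f = avg (tuples {1..t} n)
      (\<lambda>x. of_bool (\<forall>e\<in>E. (\<Prod>i\<in>e. f (x i)) * f (vsum e x) = f vzero ^ (card e + 1)))"
    by (simp add: accept_prob_def avg_def Int_def)
  also have "\<dots> = avg (tuples {1..t} n) (\<lambda>x. (\<Sum>F\<in>Pow E. \<Prod>e\<in>F. edge_sign f e x) / 2 ^ card E)"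
    using assms by (intro avg_cong of_bool_all_edge_tests) auto
  finally show ?thesis
    by (simp add: avg_divide avg_sum)
qed

lemma sum_Pow_div_le:
  fixes a :: "'a set \<Rightarrow> real"
  assumes "finite E" "a {} \<le> 1" "\<And>F. F \<subseteq> E \<Longrightarrow> F \<noteq> {} \<Longrightarrow> a F \<le> U" "0 \<le> U"
  shows "(\<Sum>F\<in>Pow E. a F) / 2 ^ card E \<le> 1 / 2 ^ card E + U"
proof -
  have "(\<Sum>F\<in>Pow E. a F) = a {} + (\<Sum>F\<in>Pow E - {{}}. a F)"
    using assms(1) by (simp add: sum.remove[of "Pow E" "{}"])
  also have "\<dots> \<le> 1 + (\<Sum>F\<in>Pow E - {{}}. U)"
    using assms(2,3) by (intro add_mono sum_mono) auto
  also have "\<dots> \<le> 1 + 2 ^ card E * U"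
    using assms(1,4) card_Diff1_le[of "Pow E" "{}"] by (simp add: card_Pow mult_right_mono)
  finally have "(\<Sum>F\<in>Pow E. a F) / 2 ^ card E \<le> (1 + 2 ^ card E * U) / 2 ^ card E"
    by (intro divide_right_mono) auto
  then show ?thesis
    by (simp add: add_divide_distrib)
qed

theorem theorem2p2:
  fixes n t :: nat and E :: "nat set set" and f :: "(nat \<Rightarrow> bool) \<Rightarrow> real"
  assumes edges: "\<forall>e\<in>E. e \<subseteq> {1..t} \<and> 2 \<le> card e"
    and nonempty: "E \<noteq> {}"
    and f_pm: "\<forall>x\<in>cube n. f x \<in> {-1, 1}"
  shows "accept_prob n t E f \<le> 1 / 2 ^ card E + gowers_norm n (Max (card ` E)) f"
proof -
  define d where "d = Max (card ` E)"
  have "finite E"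
    using edges by (intro finite_subset[of E "Pow {1..t}"]) auto
  then have edge: "e \<subseteq> {1..t} \<and> 2 \<le> card e \<and> card e \<le> d" if "e \<in> E" for e
    using edges that by (simp add: d_def)
  then have "0 < d"
    using nonempty by fastforce
  have term_bound: "avg (tuples {1..t} n) (\<lambda>x. \<Prod>e\<in>F. edge_sign f e x) \<le> gowers_norm n d f"
    if "F \<subseteq> E" "F \<noteq> {}" for F
  proof (rule abs_le_D1, rule abs_avg_prod_edge_sign_le_gowers_norm[OF f_pm])
    show "finite F"
      using \<open>F \<subseteq> E\<close> \<open>finite E\<close> by (rule finite_subset)
  qed (use that edge in auto)
  have "accept_prob n t E f
      = (\<Sum>F\<in>Pow E. avg (tuples {1..t} n) (\<lambda>x. \<Prod>e\<in>F. edge_sign f e x)) / 2 ^ card E"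
    using f_pm \<open>finite E\<close> edge by (intro accept_prob_eq_sum_Pow) auto
  also have "\<dots> \<le> 1 / 2 ^ card E + gowers_norm n d f"
    using \<open>finite E\<close> term_bound \<open>0 < d\<close>
    by (intro sum_Pow_div_le) (simp_all add: avg_const gowers_norm_nonneg)
  finally show ?thesis
    by (simp add: d_def)
qed

end
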